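(* Let $(\Omega,\mathcal F)$ be a measurable space with $\Sigma\neq\emptyset$ and $v_0:\mathcal F\to[0,\infty)$ a non-decreasing continuous set function with $v_0(\emptyset)=0$. Suppose $v_n:\mathcal F\to[0,\infty)$, $n=0,1,2,\dots$, is a sequence of continuous set functions satisfying $v_{n+1}(A)=\sup_{\mathcal I\in\Sigma}\mu_{v_n,\mathcal I}(A)$ for all $A\in\mathcal F$ and $n\ge0$. Then for each $A\in\mathcal F$ the sequence $v_n(A)$ is non-decreasing and bounded above by $v_0(\Omega)$, hence converges; and the limit $v(A)=\lim_n v_n(A)$ is non-decreasing, submodular, satisfies $v(\emptyset)=0$, $v(\Omega)=v_0(\Omega)$, and $\lim_n v(A_n)=v(\bigcup_n A_n)$ for every sequence $A_1\subset A_2\subset\cdots$ in $\mathcal F$.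
   Context: $\Sigma$ denotes the set of all classes $\mathcal I\subset\mathcal F$ that are chains (totally ordered by inclusion), contain $\emptyset$ and $\Omega$, and generate $\mathcal F$ as a $\sigma$-algebra. $v$ is non-decreasing if $v(A)\le v(B)$ for $A\subset B$; submodular if $v(A)+v(B)\ge v(A\cup B)+v(A\cap B)$. For $\mathcal I\in\Sigma$ let $\mathcal J$ be the algebra generated by $\mathcal I$, whose elements are the sets $\bigcup_{i=1}^n (C_i\cap D_i^c)$ with $C_1\supset D_1\supset\cdots\supset C_n\supset D_n$ in $\mathcal I$; for non-decreasing $v$ define $\mu_{v,\mathcal I}(\bigcup_{i=1}^n (C_i\cap D_i^c))=\sum_{i=1}^n(v(C_i)-v(D_i))$. A set function $v$ is continuous if it is non-decreasing and, for every $\mathcal I\in\Sigma$, $\mu_{v,\mathcal I}$ is $\sigma$-additive on $\mathcal J$; then $\mu_{v,\mathcal I}$ extends uniquely to a measure on $\mathcal F$, also denoted $\mu_{v,\mathcal I}$. *)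

theory Defs
  imports "HOL-Probability.Probability"
begin

definition chain_class :: "'a set \<Rightarrow> 'a set set \<Rightarrow> 'a set set set" where
  "chain_class \<Omega> F = {I. I \<subseteq> F \<and> (\<forall>C\<in>I. \<forall>D\<in>I. C \<subseteq> D \<or> D \<subseteq> C)
      \<and> {} \<in> I \<and> \<Omega> \<in> I \<and> sigma_sets \<Omega> I = F}"

definition chain_rep :: "'a set set \<Rightarrow> nat \<Rightarrow> (nat \<Rightarrow> 'a set) \<Rightarrow> (nat \<Rightarrow> 'a set) \<Rightarrow> bool" where
  "chain_rep I n C D \<longleftrightarrow> (\<forall>i<n. C i \<in> I \<and> D i \<in> I \<and> D i \<subseteq> C i)
      \<and> (\<forall>i. Suc i < n \<longrightarrow> C (Suc i) \<subseteq> D i)"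

definition gen_alg :: "'a set set \<Rightarrow> 'a set set" where
  "gen_alg I = {A. \<exists>n C D. chain_rep I n C D \<and> A = (\<Union>i<n. C i \<inter> - D i)}"

definition mu_J :: "('a set \<Rightarrow> real) \<Rightarrow> 'a set set \<Rightarrow> 'a set \<Rightarrow> real" where
  "mu_J v I A = (SOME r. \<exists>n C D. chain_rep I n C D \<and> A = (\<Union>i<n. C i \<inter> - D i)
                   \<and> r = (\<Sum>i<n. v (C i) - v (D i)))"

definition nondecreasing_on :: "'a set set \<Rightarrow> ('a set \<Rightarrow> real) \<Rightarrow> bool" where
  "nondecreasing_on F v \<longleftrightarrow> (\<forall>A\<in>F. \<forall>B\<in>F. A \<subseteq> B \<longrightarrow> v A \<le> v B)"

definition continuous_sf :: "'a set \<Rightarrow> 'a set set \<Rightarrow> ('a set \<Rightarrow> real) \<Rightarrow> bool" where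
  "continuous_sf \<Omega> F v \<longleftrightarrow> nondecreasing_on F v \<and>
     (\<forall>I\<in>chain_class \<Omega> F. \<forall>A :: nat \<Rightarrow> 'a set.
        range A \<subseteq> gen_alg I \<longrightarrow> disjoint_family A \<longrightarrow> (\<Union>(range A)) \<in> gen_alg I \<longrightarrow>
        (\<lambda>i. mu_J v I (A i)) sums mu_J v I (\<Union>(range A)))"

definition mu_ext :: "'a set \<Rightarrow> 'a set set \<Rightarrow> ('a set \<Rightarrow> real) \<Rightarrow> 'a set set \<Rightarrow> 'a set \<Rightarrow> real" where
  "mu_ext \<Omega> F v I A = measure (THE N. space N = \<Omega> \<and> sets N = F \<and>
      (\<forall>B\<in>gen_alg I. emeasure N B = ennreal (mu_J v I B))) A"

definition submodular_on :: "'a set set \<Rightarrow> ('a set \<Rightarrow> real) \<Rightarrow> bool" where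
  "submodular_on F v \<longleftrightarrow> (\<forall>A\<in>F. \<forall>B\<in>F. v A + v B \<ge> v (A \<union> B) + v (A \<inter> B))"

end

theory Submission
  imports Defs
begin

(* On a chain I in Sigma the continuous set function v_n determines a finite measure mu_{v_n,I}
   with mu(X) = v_n(X) - v_n({}) for X in I. Every set of F, every pair X \<subseteq> Y and every
   increasing sequence together with its union lies on such a chain: an increasing sequence A_n
   can be interleaved with a given generating chain I_0 via the sets (\<Union>i<n. A_i) \<union> (B \<inter> A_n)
   and (\<Union>i. A_i) \<union> B, B in I_0. Hence v_n \<le> v_{n+1} \<le> v_n(\<Omega>), so v_n(\<Omega>) is constant,
   and the v_n(A) converge. On a chain through X \<inter> Y \<subseteq> X \<union> Y additivity of mu gives
   v_n(X \<union> Y) + v_n(X \<inter> Y) = mu(X) + mu(Y) \<le> v_{n+1}(X) + v_{n+1}(Y), which passes to the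
   limit. Each v_n is continuous from below (a chain through the sequence turns it into a measure),
   and since all the sequences involved increase, the two limits can be exchanged. *)

section \<open>Chains and the algebra they generate\<close>

lemma chain_classD:
  assumes "I \<in> chain_class \<Omega> F"
  shows "I \<subseteq> F" "chain\<^sub>\<subseteq> I" "{} \<in> I" "\<Omega> \<in> I" "sigma_sets \<Omega> I = F"
  using assms unfolding chain_class_def chain_subset_def by auto

lemma chain_subset_Un_Int:
  assumes "chain\<^sub>\<subseteq> I" "P \<in> I" "Q \<in> I"
  shows "P \<union> Q \<in> I" "P \<inter> Q \<in> I"
  using assms unfolding chain_subset_def by (metis Int_absorb1 Int_absorb2 Un_absorb1 Un_absorb2)+

lemma chain_rep_nested:
  assumes "chain_rep I n C D" "i < j" "j < n"
  shows "C j \<subseteq> D i"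
  using assms(2,3)
proof (induction j)
  case (Suc j)
  then have "C (Suc j) \<subseteq> D j" "D j \<subseteq> C j"
    using assms(1) unfolding chain_rep_def by auto
  with Suc show ?case by (cases "i = j") auto
qed simp

lemma chain_rep_telescope:
  fixes v :: "'a set \<Rightarrow> real"
  assumes "chain\<^sub>\<subseteq> I" "chain_rep I n C D" "X \<in> I" "Y \<in> I" "Y \<subseteq> X"
    and "X - Y = (\<Union>i<n. C i \<inter> - D i)"
  shows "(\<Sum>i<n. v (C i) - v (D i)) = v X - v Y"
  using assms(2-)
proof (induction n arbitrary: C D X)
  case 0
  then show ?case by auto
next
  case (Suc n C D X)
  define R where "R = (\<Union>i<n. C (Suc i) \<inter> - D (Suc i))"
  have tail: "chain_rep I n (\<lambda>i. C (Suc i)) (\<lambda>i. D (Suc i))"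
    using Suc.prems(1) unfolding chain_rep_def by auto
  have head: "C 0 \<in> I" "D 0 \<in> I" "D 0 \<subseteq> C 0"
    using Suc.prems(1) unfolding chain_rep_def by auto
  have "C (Suc i) \<subseteq> D 0" if "i < n" for i
    using chain_rep_nested[OF Suc.prems(1)] that by simp
  then have R: "R \<subseteq> D 0" unfolding R_def by blast
  have split: "X - Y = (C 0 - D 0) \<union> R"
    using Suc.prems(5) unfolding R_def by (auto simp: lessThan_Suc_eq_insert_0)
  have sum: "(\<Sum>i<Suc n. v (C i) - v (D i))
      = (v (C 0) - v (D 0)) + (\<Sum>i<n. v (C (Suc i)) - v (D (Suc i)))"
    by (rule sum.lessThan_Suc_shift)
  show ?case
  proof (cases "C 0 = D 0")
    case True
    then show ?thesis using Suc.IH[OF tail Suc.prems(2-4)] split sum unfolding R_def by simp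
  next
    case False
    \<comment> \<open>a nonempty first block forces \<open>C 0 = X\<close> and \<open>Y \<subseteq> D 0\<close>, as all sets are comparable\<close>
    then obtain p where p: "p \<in> C 0" "p \<notin> D 0" using head(3) by blast
    have cmp: "P \<subseteq> Q \<or> Q \<subseteq> P" if "P \<in> I" "Q \<in> I" for P Q
      using assms(1) that unfolding chain_subset_def by blast
    have YC: "Y \<subseteq> C 0" using cmp[OF Suc.prems(3) head(1)] p split by blast
    have YD: "Y \<subseteq> D 0" using cmp[OF Suc.prems(3) head(2)] YC split by blast
    have "D 0 \<subseteq> X" using cmp[OF Suc.prems(2) head(2)] p split by blast
    moreover have "X \<subseteq> C 0" using split R head(3) YC by blast
    ultimately have XC: "X = C 0" using split by blast
    have "D 0 - Y = R" using split head(3) YD R unfolding XC by blast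
    then show ?thesis using Suc.IH[OF tail head(2) Suc.prems(3) YD] XC sum unfolding R_def by simp
  qed
qed

lemma Diff_in_gen_alg: "X \<in> I \<Longrightarrow> Y \<in> I \<Longrightarrow> Y \<subseteq> X \<Longrightarrow> X - Y \<in> gen_alg I"
  unfolding gen_alg_def chain_rep_def
  by (intro CollectI exI[of _ 1] exI[of _ "\<lambda>_. X"] exI[of _ "\<lambda>_. Y"]) auto

lemma mu_J_rep:
  assumes "B \<in> gen_alg I"
  obtains n C D where "chain_rep I n C D" "B = (\<Union>i<n. C i \<inter> - D i)"
    "mu_J v I B = (\<Sum>i<n. v (C i) - v (D i))"
proof -
  let ?P = "\<lambda>r. \<exists>n C D. chain_rep I n C D \<and> B = (\<Union>i<n. C i \<inter> - D i)
                   \<and> r = (\<Sum>i<n. v (C i) - v (D i))"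
  from assms have "\<exists>r. ?P r" unfolding gen_alg_def by blast
  then have "?P (mu_J v I B)" unfolding mu_J_def by (rule someI_ex)
  with that show ?thesis by blast
qed

lemma mu_J_Diff:
  assumes "chain\<^sub>\<subseteq> I" "X \<in> I" "Y \<in> I" "Y \<subseteq> X"
  shows "mu_J v I (X - Y) = v X - v Y"
proof -
  obtain n C D where "chain_rep I n C D" "X - Y = (\<Union>i<n. C i \<inter> - D i)"
    "mu_J v I (X - Y) = (\<Sum>i<n. v (C i) - v (D i))"
    using mu_J_rep[OF Diff_in_gen_alg[OF assms(2-4)]] .
  then show ?thesis using chain_rep_telescope[OF assms(1) _ assms(2-4)] by simp
qed

lemma semiring_of_sets_chain_Diff:
  assumes "chain\<^sub>\<subseteq> I" "I \<subseteq> Pow \<Omega>" "{} \<in> I"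
  shows "semiring_of_sets \<Omega> {X - Y |X Y. X \<in> I \<and> Y \<in> I \<and> Y \<subseteq> X}"
    (is "semiring_of_sets \<Omega> ?M")
proof -
  note closed = chain_subset_Un_Int[OF assms(1)]
  have Diff_in: "X - Y \<in> ?M" if "X \<in> I" "Y \<in> I" for X Y
  proof -
    have "X - Y = X - X \<inter> Y" by blast
    moreover have "X \<inter> Y \<in> I" using closed that by blast
    ultimately show ?thesis using that by blast
  qed
  show ?thesis
  proof
    show "?M \<subseteq> Pow \<Omega>" using assms(2) by blast
    show "{} \<in> ?M" using Diff_in[OF assms(3) assms(3)] by simp
  next
    fix a b assume "a \<in> ?M" "b \<in> ?M"
    then obtain X1 Y1 X2 Y2 where a: "a = X1 - Y1" and b: "b = X2 - Y2" "Y2 \<subseteq> X2"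
      and I: "X1 \<in> I" "Y1 \<in> I" "X2 \<in> I" "Y2 \<in> I" by blast
    have "a \<inter> b = X1 \<inter> X2 - (Y1 \<union> Y2)" using a b by blast
    then show "a \<inter> b \<in> ?M" using Diff_in[OF closed(2)[OF I(1,3)] closed(1)[OF I(2,4)]] by simp
    let ?P = "X1 - (Y1 \<union> X2)" and ?Q = "X1 \<inter> Y2 - Y1"
    have "a - b = ?P \<union> ?Q" "?P \<inter> ?Q = {}" using a b by blast+
    moreover have "{?P, ?Q} \<subseteq> ?M"
      using Diff_in[OF I(1) closed(1)[OF I(2,3)]] Diff_in[OF closed(2)[OF I(1,4)] I(2)] by simp
    ultimately show "\<exists>C\<subseteq>?M. finite C \<and> disjoint C \<and> a - b = \<Union>C"
      by (intro exI[of _ "{?P, ?Q}"]) (auto simp: disjoint_def)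
  qed
qed

lemma disjoint_family_on_chain_rep:
  assumes "chain_rep I n C D"
  shows "disjoint_family_on (\<lambda>i. C i - D i) {..<n}"
proof -
  have "(C i - D i) \<inter> (C j - D j) = {}" if "i < j" "j < n" for i j
    using chain_rep_nested[OF assms that] by blast
  then show ?thesis unfolding disjoint_family_on_def
    by (metis Int_commute lessThan_iff linorder_neqE_nat)
qed

lemma emeasure_eq_mu_J:
  fixes v :: "'a set \<Rightarrow> real"
  assumes "I \<subseteq> sets N"
    and mono: "\<And>X Y. X \<in> I \<Longrightarrow> Y \<in> I \<Longrightarrow> Y \<subseteq> X \<Longrightarrow> v Y \<le> v X"
    and Diff: "\<And>X Y. X \<in> I \<Longrightarrow> Y \<in> I \<Longrightarrow> Y \<subseteq> X \<Longrightarrow> emeasure N (X - Y) = v X - v Y"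
    and "B \<in> gen_alg I"
  shows "emeasure N B = mu_J v I B"
proof -
  obtain n C D where rep: "chain_rep I n C D" "B = (\<Union>i<n. C i \<inter> - D i)"
    "mu_J v I B = (\<Sum>i<n. v (C i) - v (D i))"
    using mu_J_rep[OF assms(4)] .
  have B: "B = (\<Union>i<n. C i - D i)" using rep(2) by (simp add: Diff_eq)
  have CD: "C i \<in> I" "D i \<in> I" "D i \<subseteq> C i" if "i < n" for i
    using rep(1) that unfolding chain_rep_def by auto
  have "emeasure N B = (\<Sum>i<n. emeasure N (C i - D i))"
    unfolding B using CD assms(1) disjoint_family_on_chain_rep[OF rep(1)]
    by (intro sum_emeasure[symmetric]) (auto intro!: sets.Diff)
  also have "\<dots> = (\<Sum>i<n. ennreal (v (C i) - v (D i)))"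
    using CD Diff by simp
  also have "\<dots> = ennreal (\<Sum>i<n. v (C i) - v (D i))"
    using CD mono by (intro sum_ennreal) simp
  finally show ?thesis using rep(3) by simp
qed

section \<open>The measure of a continuous set function on a chain\<close>

context sigma_algebra
begin

lemma chain_measure_exists:
  assumes I: "I \<in> chain_class \<Omega> M" and v: "continuous_sf \<Omega> M v"
  obtains N where "sets N = M" "space N = \<Omega>"
    "\<And>X Y. X \<in> I \<Longrightarrow> Y \<in> I \<Longrightarrow> Y \<subseteq> X \<Longrightarrow> emeasure N (X - Y) = v X - v Y"
proof -
  note ID = chain_classD[OF I]
  let ?E = "{X - Y |X Y. X \<in> I \<and> Y \<in> I \<and> Y \<subseteq> X}"
  let ?f = "\<lambda>S. ennreal (mu_J v I S)"
  have E_mu_J: "mu_J v I (X - Y) = v X - v Y" if "X \<in> I" "Y \<in> I" "Y \<subseteq> X" for X Y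
    using mu_J_Diff[OF ID(2) that] .
  have E_nonneg: "0 \<le> mu_J v I S" if "S \<in> ?E" for S
  proof -
    from that obtain X Y where XY: "S = X - Y" "X \<in> I" "Y \<in> I" "Y \<subseteq> X" by blast
    then have "v Y \<le> v X"
      using v ID(1) unfolding continuous_sf_def nondecreasing_on_def by blast
    then show ?thesis using XY E_mu_J by simp
  qed
  have E_gen_alg: "?E \<subseteq> gen_alg I" using Diff_in_gen_alg by blast
  have additive: "(\<lambda>i. mu_J v I (A i)) sums mu_J v I (\<Union>(range A))"
    if "range A \<subseteq> gen_alg I" "disjoint_family A" "\<Union>(range A) \<in> gen_alg I" for A
    using v I that unfolding continuous_sf_def by blast
  interpret E: semiring_of_sets \<Omega> ?E
    using semiring_of_sets_chain_Diff[OF ID(2) _ ID(3)] ID(1) sets_into_space by blast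
  have "positive ?E ?f" unfolding positive_def using E_mu_J[OF ID(3) ID(3)] by simp
  moreover have "countably_additive ?E ?f"
    unfolding countably_additive_def
  proof (intro allI impI)
    fix A :: "nat \<Rightarrow> 'a set"
    assume A: "range A \<subseteq> ?E" "disjoint_family A" "(\<Union>i. A i) \<in> ?E"
    have "(\<lambda>i. mu_J v I (A i)) sums mu_J v I (\<Union>i. A i)"
      using subset_trans[OF A(1) E_gen_alg] A(2) subsetD[OF E_gen_alg A(3)] by (rule additive)
    moreover have "0 \<le> mu_J v I (A i)" for i
      using E_nonneg[OF subsetD[OF A(1) rangeI]] .
    ultimately show "(\<Sum>i. ?f (A i)) = ?f (\<Union>i. A i)"
      by (simp add: sums_iff suminf_ennreal2)
  qed
  ultimately obtain \<mu> where \<mu>: "\<forall>S\<in>?E. \<mu> S = ?f S" "measure_space \<Omega> (sigma_sets \<Omega> ?E) \<mu>"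
    using E.caratheodory by blast
  have "sigma_sets \<Omega> ?E = M"
  proof
    have "?E \<subseteq> M" using ID(1) by blast
    then show "sigma_sets \<Omega> ?E \<subseteq> M" by (rule sigma_sets_subset)
    have "X \<in> ?E" if "X \<in> I" for X
      using that ID(3) by (intro CollectI exI[of _ X] exI[of _ "{}"]) simp
    then have "sigma_sets \<Omega> I \<subseteq> sigma_sets \<Omega> ?E" by (intro sigma_sets_mono') blast
    then show "M \<subseteq> sigma_sets \<Omega> ?E" using ID(5) by simp
  qed
  with \<mu>(2) have emeasure_\<mu>: "emeasure (measure_of \<Omega> M \<mu>) S = \<mu> S" if "S \<in> M" for S
    using that by (intro emeasure_measure_of_sigma) (auto simp: measure_space_def)
  show thesis
  proof (rule that)
    show "sets (measure_of \<Omega> M \<mu>) = M" "space (measure_of \<Omega> M \<mu>) = \<Omega>"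
      using space_closed by simp_all
    fix X Y assume XY: "X \<in> I" "Y \<in> I" "Y \<subseteq> X"
    then have "X - Y \<in> ?E" by blast
    have "X - Y \<in> M" using XY ID(1) by blast
    then have "emeasure (measure_of \<Omega> M \<mu>) (X - Y) = \<mu> (X - Y)" by (rule emeasure_\<mu>)
    also have "\<dots> = mu_J v I (X - Y)" using \<mu>(1) \<open>X - Y \<in> ?E\<close> by blast
    finally show "emeasure (measure_of \<Omega> M \<mu>) (X - Y) = v X - v Y"
      using E_mu_J[OF XY] by simp
  qed
qed

lemma mu_ext_measure:
  assumes I: "I \<in> chain_class \<Omega> M" and v: "continuous_sf \<Omega> M v"
  obtains N where "finite_measure N" "sets N = M" "space N = \<Omega>"
    "\<And>X. X \<in> I \<Longrightarrow> measure N X = v X - v {}" "mu_ext \<Omega> M v I = measure N"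
proof -
  note ID = chain_classD[OF I]
  have mono: "v Y \<le> v X" if "X \<in> I" "Y \<in> I" "Y \<subseteq> X" for X Y
    using v ID(1) that unfolding continuous_sf_def nondecreasing_on_def by blast
  obtain N where N: "sets N = M" "space N = \<Omega>"
    and Diff: "\<And>X Y. X \<in> I \<Longrightarrow> Y \<in> I \<Longrightarrow> Y \<subseteq> X \<Longrightarrow> emeasure N (X - Y) = v X - v Y"
    using chain_measure_exists[OF I v] by blast
  let ?P = "\<lambda>N. space N = \<Omega> \<and> sets N = M \<and> (\<forall>B\<in>gen_alg I. emeasure N B = ennreal (mu_J v I B))"
  have "?P N" using N emeasure_eq_mu_J[of I N v] ID(1) mono Diff by auto
  moreover have "N' = N" if N': "?P N'" for N'
  proof (rule measure_eqI_generator_eq[where E=I and \<Omega>=\<Omega> and A="\<lambda>_. \<Omega>"])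
    show "Int_stable I" unfolding Int_stable_def using chain_subset_Un_Int[OF ID(2)] by blast
    show "I \<subseteq> Pow \<Omega>" using ID(1) sets_into_space by blast
    show "sets N' = sigma_sets \<Omega> I" "sets N = sigma_sets \<Omega> I" using N' N(1) ID(5) by auto
    show "range (\<lambda>_. \<Omega>) \<subseteq> I" "(\<Union>i. \<Omega>) = \<Omega>" using ID(4) by auto
    have I_gen_alg: "X \<in> gen_alg I" if "X \<in> I" for X
      using Diff_in_gen_alg[OF that ID(3)] by simp
    show "emeasure N' X = emeasure N X" if "X \<in> I" for X
      using N' \<open>?P N\<close> I_gen_alg[OF that] by simp
    show "emeasure N' \<Omega> \<noteq> \<infinity>"
      using N' I_gen_alg[OF ID(4)] by simp
  qed
  ultimately have "(THE N. ?P N) = N" by (rule the_equality)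
  then have "mu_ext \<Omega> M v I = measure N" unfolding mu_ext_def by auto
  moreover have emeasure_I: "emeasure N X = v X - v {}" if "X \<in> I" for X
    using Diff[OF that ID(3)] by simp
  moreover have "finite_measure N"
    using emeasure_I[OF ID(4)] N(2) by (intro finite_measureI) simp
  moreover have "measure N X = v X - v {}" if "X \<in> I" for X
    using emeasure_I[OF that] mono[OF that ID(3)] by (simp add: measure_def)
  ultimately show thesis using that N by blast
qed

lemma mu_ext_chain:
  assumes "I \<in> chain_class \<Omega> M" "continuous_sf \<Omega> M v" "X \<in> I"
  shows "mu_ext \<Omega> M v I X = v X - v {}"
proof -
  obtain N where "\<And>X. X \<in> I \<Longrightarrow> measure N X = v X - v {}" "mu_ext \<Omega> M v I = measure N"
    using mu_ext_measure[OF assms(1,2)] by blast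
  with assms(3) show ?thesis by simp
qed

lemma mu_ext_empty:
  assumes "I \<in> chain_class \<Omega> M" "continuous_sf \<Omega> M v"
  shows "mu_ext \<Omega> M v I {} = 0"
proof -
  obtain N where "mu_ext \<Omega> M v I = measure N"
    using mu_ext_measure[OF assms] by blast
  then show ?thesis by simp
qed

lemma mu_ext_le:
  assumes "I \<in> chain_class \<Omega> M" "continuous_sf \<Omega> M v"
  shows "mu_ext \<Omega> M v I A \<le> v \<Omega> - v {}"
proof -
  obtain N where N: "finite_measure N" "space N = \<Omega>"
    "\<And>X. X \<in> I \<Longrightarrow> measure N X = v X - v {}" "mu_ext \<Omega> M v I = measure N"
    using mu_ext_measure[OF assms] by blast
  have "measure N A \<le> measure N (space N)" by (rule finite_measure.bounded_measure[OF N(1)])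
  then show ?thesis using N(2-4) chain_classD(4)[OF assms(1)] by simp
qed

lemma mu_ext_Un_Int:
  assumes "I \<in> chain_class \<Omega> M" "continuous_sf \<Omega> M v"
    and "X \<in> M" "Y \<in> M" "X \<union> Y \<in> I" "X \<inter> Y \<in> I"
  shows "mu_ext \<Omega> M v I X + mu_ext \<Omega> M v I Y = (v (X \<union> Y) - v {}) + (v (X \<inter> Y) - v {})"
proof -
  obtain N where N: "finite_measure N" "sets N = M"
    "\<And>X. X \<in> I \<Longrightarrow> measure N X = v X - v {}" "mu_ext \<Omega> M v I = measure N"
    using mu_ext_measure[OF assms(1,2)] by blast
  have "measure N (X \<union> Y) = measure N X + measure N Y - measure N (X \<inter> Y)"
    using assms(3,4) N(2) by (intro measure_Un3) (simp_all add: finite_measure.fmeasurable_eq_sets[OF N(1)])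
  then show ?thesis using N(3)[OF assms(5)] N(3)[OF assms(6)] N(4) by simp
qed

end

section \<open>Chains through increasing sequences\<close>

lemma chain_subset_interleave:
  fixes A :: "nat \<Rightarrow> 'a set"
  assumes "chain\<^sub>\<subseteq> I"
  shows "chain\<^sub>\<subseteq> ({(\<Union>i<n. A i) \<union> (B \<inter> A n) |n B. B \<in> I} \<union> {(\<Union>i. A i) \<union> B |B. B \<in> I})"
proof -
  let ?g = "\<lambda>n B. (\<Union>i<n. A i) \<union> (B \<inter> A n)"
  define L where "L = {?g n B |n B. B \<in> I}"
  define R where "R = {(\<Union>i. A i) \<union> B |B. B \<in> I}"
  have cmp: "B \<subseteq> B' \<or> B' \<subseteq> B" if "B \<in> I" "B' \<in> I" for B B'
    using assms that unfolding chain_subset_def by blast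
  have g_less: "?g n B \<subseteq> ?g m B'" if "n < m" for n m B B'
  proof -
    have "(\<Union>i<Suc n. A i) \<subseteq> (\<Union>i<m. A i)" using that by (intro UN_mono) auto
    then show ?thesis by (auto simp: lessThan_Suc)
  qed
  have g_mono: "?g n B \<subseteq> ?g n B'" if "B \<subseteq> B'" for n B B'
    using that by (intro Un_mono Int_mono order_refl)
  have LL: "C \<subseteq> D \<or> D \<subseteq> C" if mem: "C \<in> L" "D \<in> L" for C D
  proof -
    obtain n B m B' where CD: "C = ?g n B" "D = ?g m B'" "B \<in> I" "B' \<in> I"
      using mem unfolding L_def by auto
    show ?thesis
    proof (cases n m rule: linorder_cases)
      case less
      then have "C \<subseteq> D" unfolding CD(1,2) by (rule g_less)
      then show ?thesis ..
    next
      case equal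
      have "?g m B \<subseteq> ?g m B' \<or> ?g m B' \<subseteq> ?g m B"
        using cmp[OF CD(3,4)] g_mono[of B B' m] g_mono[of B' B m] by blast
      then show ?thesis unfolding CD(1,2) equal .
    next
      case greater
      then have "D \<subseteq> C" unfolding CD(1,2) by (rule g_less)
      then show ?thesis ..
    qed
  qed
  have LR: "C \<subseteq> D" if mem: "C \<in> L" "D \<in> R" for C D
  proof -
    obtain n B B' where "C = ?g n B" "D = (\<Union>i. A i) \<union> B'"
      using mem unfolding L_def R_def by auto
    then show ?thesis by auto
  qed
  have RR: "C \<subseteq> D \<or> D \<subseteq> C" if mem: "C \<in> R" "D \<in> R" for C D
  proof -
    obtain B B' where "C = (\<Union>i. A i) \<union> B" "D = (\<Union>i. A i) \<union> B'" "B \<in> I" "B' \<in> I"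
      using mem unfolding R_def by auto
    then show ?thesis using cmp by blast
  qed
  have "chain\<^sub>\<subseteq> (L \<union> R)"
    unfolding chain_subset_def using LL LR RR by blast
  then show ?thesis unfolding L_def R_def .
qed

locale chain_generated = sigma_algebra +
  assumes chain_class_nonempty: "chain_class \<Omega> M \<noteq> {}"
begin

lemma chain_class_extend_incseq:
  assumes A: "range A \<subseteq> M" "incseq A"
  obtains I where "I \<in> chain_class \<Omega> M" "range A \<subseteq> I" "(\<Union>i. A i) \<in> I"
proof -
  obtain I0 where "I0 \<in> chain_class \<Omega> M" using chain_class_nonempty by blast
  note I0 = chain_classD[OF this]
  define U where "U = (\<Union>i. A i)"
  define P where "P n = (\<Union>i<n. A i)" for n
  define I where "I = {P n \<union> (B \<inter> A n) |n B. B \<in> I0} \<union> {U \<union> B |B. B \<in> I0}"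
  have AM: "A n \<in> M" for n using A(1) by blast
  have PM: "P n \<in> M" for n unfolding P_def using AM by blast
  have UM: "U \<in> M" unfolding U_def using AM by blast
  have IM: "I \<subseteq> M" unfolding I_def using I0(1) AM PM UM by blast
  have P_in: "P n \<in> I" for n
  proof (cases n)
    case 0
    then have "P n = P 0 \<union> ({} \<inter> A 0)" unfolding P_def by simp
    then show ?thesis using I0(3) unfolding I_def by blast
  next
    case (Suc m)
    then have "P n = P m \<union> (\<Omega> \<inter> A m)"
      unfolding P_def using AM sets_into_space by (auto simp: lessThan_Suc)
    then show ?thesis using I0(4) unfolding I_def by blast
  qed
  have A_in: "A n \<in> I" for n
  proof -
    have "A i \<subseteq> A n" if "i < n" for i using incseqD[OF A(2), of i n] that by simp
    then have "P n \<subseteq> A n" unfolding P_def by blast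
    then have "A n = P n \<union> (\<Omega> \<inter> A n)" using AM sets_into_space by blast
    then show ?thesis using I0(4) unfolding I_def by blast
  qed
  have U_in: "U \<in> I" using I0(3) unfolding I_def by force
  have empty_in: "{} \<in> I" using P_in[of 0] unfolding P_def by simp
  have Omega_in: "\<Omega> \<in> I"
  proof -
    have "\<Omega> = U \<union> \<Omega>" using UM sets_into_space by blast
    then show ?thesis using I0(4) unfolding I_def by blast
  qed
  interpret S: sigma_algebra \<Omega> "sigma_sets \<Omega> I"
    using IM space_closed by (intro sigma_algebra_sigma_sets) auto
  have I0_gen: "B \<in> sigma_sets \<Omega> I" if "B \<in> I0" for B
  proof -
    have "B \<inter> disjointed A n = (P n \<union> (B \<inter> A n)) - P n" for n
      unfolding disjointed_def P_def by (auto simp: atLeast0LessThan)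
    moreover have "P n \<union> (B \<inter> A n) \<in> I" for n using that unfolding I_def by blast
    ultimately have "B \<inter> disjointed A n \<in> sigma_sets \<Omega> I" for n
      using P_in by (simp add: S.Diff sigma_sets.Basic)
    then have inside: "(\<Union>n. B \<inter> disjointed A n) \<in> sigma_sets \<Omega> I" by blast
    have "U \<union> B \<in> I" using that unfolding I_def by blast
    then have outside: "(U \<union> B) - U \<in> sigma_sets \<Omega> I"
      using U_in by (intro S.Diff sigma_sets.Basic)
    have "B = (\<Union>n. B \<inter> disjointed A n) \<union> ((U \<union> B) - U)"
      using UN_disjointed_eq[of A] unfolding U_def by blast
    then show ?thesis by (subst \<open>B = _\<close>) (intro S.Un inside outside)
  qed
  have "sigma_sets \<Omega> I = M"
  proof
    show "sigma_sets \<Omega> I \<subseteq> M" using IM by (rule sigma_sets_subset)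
    have "sigma_sets \<Omega> I0 \<subseteq> sigma_sets \<Omega> I" using I0_gen by (intro sigma_sets_mono) blast
    then show "M \<subseteq> sigma_sets \<Omega> I" using I0(5) by simp
  qed
  moreover have "chain\<^sub>\<subseteq> I"
    unfolding I_def P_def U_def by (rule chain_subset_interleave[OF I0(2)])
  ultimately have "I \<in> chain_class \<Omega> M"
    using IM empty_in Omega_in unfolding chain_class_def chain_subset_def by blast
  then show thesis using A_in U_in unfolding U_def by (intro that) auto
qed

lemma chain_class_extend_subset:
  assumes "X \<in> M" "Y \<in> M" "X \<subseteq> Y"
  obtains I where "I \<in> chain_class \<Omega> M" "X \<in> I" "Y \<in> I"
proof -
  let ?A = "\<lambda>n::nat. if n = 0 then X else Y"
  have "range ?A \<subseteq> M" "incseq ?A" using assms unfolding incseq_def by auto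
  then obtain I where "I \<in> chain_class \<Omega> M" "range ?A \<subseteq> I"
    by (rule chain_class_extend_incseq)
  moreover have "X = ?A 0" "Y = ?A 1" by simp_all
  ultimately show thesis by (intro that) blast+
qed

lemma continuous_sf_LIMSEQ_incseq:
  assumes v: "continuous_sf \<Omega> M v" and A: "range A \<subseteq> M" "incseq A"
  shows "(\<lambda>n. v (A n)) \<longlonglongrightarrow> v (\<Union>i. A i)"
proof -
  obtain I where I: "I \<in> chain_class \<Omega> M" "range A \<subseteq> I" "(\<Union>i. A i) \<in> I"
    using chain_class_extend_incseq[OF A] .
  obtain N where N: "finite_measure N" "sets N = M" "\<And>X. X \<in> I \<Longrightarrow> measure N X = v X - v {}"
    using mu_ext_measure[OF I(1) v] by blast
  have "(\<lambda>n. measure N (A n)) \<longlonglongrightarrow> measure N (\<Union>i. A i)"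
    using A N(2) by (intro finite_measure.finite_Lim_measure_incseq[OF N(1)]) auto
  moreover have "measure N (A n) = v (A n) - v {}" for n using N(3) I(2) by blast
  ultimately have "(\<lambda>n. v (A n) - v {}) \<longlonglongrightarrow> v (\<Union>i. A i) - v {}" using N(3)[OF I(3)] by simp
  from tendsto_add[OF this tendsto_const[of "v {}"]] show ?thesis by simp
qed

end

section \<open>Iterating the supremum over chains\<close>

locale chain_iteration = chain_generated \<Omega> F for \<Omega> :: "'a set" and F +
  fixes v :: "nat \<Rightarrow> 'a set \<Rightarrow> real"
  assumes v_0_empty: "v 0 {} = 0"
    and continuous_v: "continuous_sf \<Omega> F (v n)"
    and v_Suc: "A \<in> F \<Longrightarrow> v (Suc n) A = (SUP I\<in>chain_class \<Omega> F. mu_ext \<Omega> F (v n) I A)"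
begin

abbreviation v_lim :: "'a set \<Rightarrow> real" where
  "v_lim A \<equiv> lim (\<lambda>n. v n A)"

lemma v_mono: "X \<in> F \<Longrightarrow> Y \<in> F \<Longrightarrow> X \<subseteq> Y \<Longrightarrow> v n X \<le> v n Y"
  using continuous_v[of n] unfolding continuous_sf_def nondecreasing_on_def by blast

lemma v_empty: "v n {} = 0"
proof (induction n)
  case (Suc n)
  have "(SUP I\<in>chain_class \<Omega> F. mu_ext \<Omega> F (v n) I {}) = (SUP I\<in>chain_class \<Omega> F. 0 :: real)"
    using mu_ext_empty[OF _ continuous_v] by (intro SUP_cong) auto
  then show ?case using v_Suc[of "{}" n] chain_class_nonempty by simp
qed (rule v_0_empty)

lemma mu_ext_le_v_Suc:
  assumes "I \<in> chain_class \<Omega> F" "A \<in> F"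
  shows "mu_ext \<Omega> F (v n) I A \<le> v (Suc n) A"
proof -
  have "bdd_above ((\<lambda>I. mu_ext \<Omega> F (v n) I A) ` chain_class \<Omega> F)"
    using mu_ext_le[OF _ continuous_v] by (intro bdd_aboveI) auto
  then show ?thesis unfolding v_Suc[OF assms(2)] by (rule cSUP_upper[OF assms(1)])
qed

lemma v_Suc_le_Omega: "A \<in> F \<Longrightarrow> v (Suc n) A \<le> v n \<Omega>"
  unfolding v_Suc using chain_class_nonempty mu_ext_le[OF _ continuous_v] v_empty
  by (intro cSUP_least) auto

lemma v_le_v_Suc:
  assumes "A \<in> F"
  shows "v n A \<le> v (Suc n) A"
proof -
  obtain I where I: "I \<in> chain_class \<Omega> F" "A \<in> I"
    using chain_class_extend_subset[OF assms assms] by blast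
  then have "v n A = mu_ext \<Omega> F (v n) I A"
    using mu_ext_chain[OF I(1) continuous_v] v_empty by simp
  also have "\<dots> \<le> v (Suc n) A" by (rule mu_ext_le_v_Suc[OF I(1) assms])
  finally show ?thesis .
qed

lemma v_Omega: "v n \<Omega> = v 0 \<Omega>"
proof (induction n)
  case (Suc n)
  then show ?case using v_Suc_le_Omega[OF top, of n] v_le_v_Suc[OF top, of n] by simp
qed simp

lemma incseq_v: "A \<in> F \<Longrightarrow> incseq (\<lambda>n. v n A)"
  by (intro incseq_SucI v_le_v_Suc)

lemma v_le_v_0_Omega:
  assumes "A \<in> F"
  shows "v n A \<le> v 0 \<Omega>"
  using v_mono[OF assms top sets_into_space[OF assms], of n] v_Omega[of n] by simp

lemma LIMSEQ_v:
  assumes "A \<in> F"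
  shows "(\<lambda>n. v n A) \<longlonglongrightarrow> v_lim A"
proof -
  obtain L where "(\<lambda>n. v n A) \<longlonglongrightarrow> L"
    using incseq_convergent[OF incseq_v[OF assms], of "v 0 \<Omega>"] v_le_v_0_Omega[OF assms] by blast
  then show ?thesis by (simp add: limI)
qed

lemma v_le_v_lim: "A \<in> F \<Longrightarrow> v n A \<le> v_lim A"
  by (rule incseq_le[OF incseq_v LIMSEQ_v])

lemma v_lim_mono: "X \<in> F \<Longrightarrow> Y \<in> F \<Longrightarrow> X \<subseteq> Y \<Longrightarrow> v_lim X \<le> v_lim Y"
  by (rule LIMSEQ_le[OF LIMSEQ_v LIMSEQ_v]) (auto intro: v_mono)

lemma v_lim_empty: "v_lim {} = 0"
  by (simp add: v_empty)

lemma v_lim_Omega: "v_lim \<Omega> = v 0 \<Omega>"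
proof -
  have "(\<lambda>n. v n \<Omega>) = (\<lambda>n. v 0 \<Omega>)" using v_Omega by blast
  then show ?thesis by simp
qed

lemma v_lim_submodular:
  assumes "X \<in> F" "Y \<in> F"
  shows "v_lim (X \<union> Y) + v_lim (X \<inter> Y) \<le> v_lim X + v_lim Y"
proof -
  obtain I where I: "I \<in> chain_class \<Omega> F" "X \<inter> Y \<in> I" "X \<union> Y \<in> I"
    using chain_class_extend_subset[of "X \<inter> Y" "X \<union> Y"] assms by blast
  have "v n (X \<union> Y) + v n (X \<inter> Y) \<le> v_lim X + v_lim Y" for n
  proof -
    have "v n (X \<union> Y) + v n (X \<inter> Y) = mu_ext \<Omega> F (v n) I X + mu_ext \<Omega> F (v n) I Y"
      using mu_ext_Un_Int[OF I(1) continuous_v assms I(3,2)] v_empty by simp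
    also have "\<dots> \<le> v (Suc n) X + v (Suc n) Y"
      using mu_ext_le_v_Suc[OF I(1)] assms by (intro add_mono)
    also have "\<dots> \<le> v_lim X + v_lim Y"
      using v_le_v_lim assms by (intro add_mono)
    finally show ?thesis .
  qed
  moreover have "(\<lambda>n. v n (X \<union> Y) + v n (X \<inter> Y)) \<longlonglongrightarrow> v_lim (X \<union> Y) + v_lim (X \<inter> Y)"
    using assms by (intro tendsto_add LIMSEQ_v) auto
  ultimately show ?thesis by (intro LIMSEQ_le_const2) auto
qed

lemma v_lim_LIMSEQ_incseq:
  assumes A: "range A \<subseteq> F" "incseq A"
  shows "(\<lambda>n. v_lim (A n)) \<longlonglongrightarrow> v_lim (\<Union>i. A i)"
proof -
  let ?U = "\<Union>i. A i"
  have AF: "A n \<in> F" for n using A(1) by blast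
  have UF: "?U \<in> F" using AF by blast
  have le_U: "v_lim (A n) \<le> v_lim ?U" for n by (rule v_lim_mono[OF AF UF]) blast
  have "incseq (\<lambda>n. v_lim (A n))"
    using A(2) by (intro incseq_SucI v_lim_mono[OF AF AF]) (simp add: incseq_SucD)
  then obtain l where l: "(\<lambda>n. v_lim (A n)) \<longlonglongrightarrow> l" "\<And>n. v_lim (A n) \<le> l"
    using incseq_convergent[of _ "v_lim ?U"] le_U by blast
  have "l \<le> v_lim ?U" using l(1) le_U by (intro LIMSEQ_le_const2) auto
  moreover have "v_lim ?U \<le> l"
  proof -
    have "v k ?U \<le> l" for k
    proof -
      have "v k (A n) \<le> l" for n using v_le_v_lim[OF AF] l(2) order_trans by blast
      then show ?thesis
        using continuous_sf_LIMSEQ_incseq[OF continuous_v[of k] A] by (intro LIMSEQ_le_const2) auto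
    qed
    then show ?thesis using LIMSEQ_v[OF UF] by (intro LIMSEQ_le_const2) auto
  qed
  ultimately have "l = v_lim ?U" by (rule antisym)
  with l(1) show ?thesis by simp
qed

end

theorem proposition20:
  fixes \<Omega> :: "'a set" and F :: "'a set set" and v :: "nat \<Rightarrow> 'a set \<Rightarrow> real"
  assumes "sigma_algebra \<Omega> F"
    and "chain_class \<Omega> F \<noteq> {}"
    and "nondecreasing_on F (v 0)"
    and "v 0 {} = 0"
    and "\<And>n A. A \<in> F \<Longrightarrow> 0 \<le> v n A"
    and "\<And>n. continuous_sf \<Omega> F (v n)"
    and "\<And>n A. A \<in> F \<Longrightarrow> v (Suc n) A = (SUP I\<in>chain_class \<Omega> F. mu_ext \<Omega> F (v n) I A)"
  shows "(\<forall>A\<in>F. incseq (\<lambda>n. v n A) \<and> (\<forall>n. v n A \<le> v 0 \<Omega>) \<and> convergent (\<lambda>n. v n A))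
    \<and> nondecreasing_on F (\<lambda>A. lim (\<lambda>n. v n A))
    \<and> submodular_on F (\<lambda>A. lim (\<lambda>n. v n A))
    \<and> lim (\<lambda>n. v n {}) = 0
    \<and> lim (\<lambda>n. v n \<Omega>) = v 0 \<Omega>
    \<and> (\<forall>A :: nat \<Rightarrow> 'a set. range A \<subseteq> F \<longrightarrow> incseq A \<longrightarrow>
         (\<lambda>n. lim (\<lambda>k. v k (A n))) \<longlonglongrightarrow> lim (\<lambda>k. v k (\<Union>(range A))))"
proof -
  have "chain_iteration \<Omega> F v"
    using assms(1,2,4,6,7)
    by (simp add: chain_iteration_def chain_iteration_axioms_def chain_generated_def
        chain_generated_axioms_def)
  then interpret chain_iteration \<Omega> F v .
  have "convergent (\<lambda>n. v n A)" if "A \<in> F" for A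
    using LIMSEQ_v[OF that] by (rule convergentI)
  then have "\<forall>A\<in>F. incseq (\<lambda>n. v n A) \<and> (\<forall>n. v n A \<le> v 0 \<Omega>) \<and> convergent (\<lambda>n. v n A)"
    using incseq_v v_le_v_0_Omega by blast
  moreover have "nondecreasing_on F v_lim"
    unfolding nondecreasing_on_def using v_lim_mono by blast
  moreover have "submodular_on F v_lim"
    unfolding submodular_on_def using v_lim_submodular by blast
  ultimately show ?thesis using v_lim_empty v_lim_Omega v_lim_LIMSEQ_incseq by blast
qed

end
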